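(* Let $D$ be a digraph with $n$ nodes. If $D$ contains no arcs, or if $n\in\{1,2\}$, then the burning number of $D$ equals $n$. If $n>2$ and $D$ has at least one arc, then the burning number of $D$ is at most $n-1$, and this bound is sharp: for every $n>2$ there exists a digraph with $n$ nodes and at least one arc whose burning number equals $n-1$.
   Context: Burning process on a digraph $D$: a sequence $(x_1,\ldots,x_b)$ of nodes is a burning sequence for $D$ if after $b$ steps of the following process every node of $D$ is burned; the $i$-th step consists of first burning all out-neighbours of all currently burned nodes, and then burning the node $x_i$ (so after the first step only $x_1$ is burned). The burning number of $D$ is the length of a shortest burning sequence for $D$. Equivalently, writing $N^+_k(v)$ for the set of nodes reachable from $v$ by a directed path with at most $k$ arcs (so $N^+_0(v)=\{v\}$), the burning number is the least $b$ for which there are nodes $v_1,\ldots,v_b$ with $V(D)=\bigcup_{i=1}^b N^+_{i-1}(v_i)$. *)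

theory Defs
  imports Main
begin

text \<open>A (finite, loopless) digraph is given by a finite node set V and an arc
relation A on V without loops; parallel arcs are irrelevant for burning.\<close>
definition digraph :: "'a set \<Rightarrow> ('a \<times> 'a) set \<Rightarrow> bool" where
  "digraph V A \<longleftrightarrow> finite V \<and> A \<subseteq> V \<times> V \<and> (\<forall>v. (v, v) \<notin> A)"

definition out_ball :: "('a \<times> 'a) set \<Rightarrow> nat \<Rightarrow> 'a \<Rightarrow> 'a set" where
  "out_ball A k v = {w. \<exists>j\<le>k. (v, w) \<in> A ^^ j}"

text \<open>A burning sequence (x_1,...,x_b), stored 0-indexed as a list xs:
V is the union of the balls N^+_{i-1}(x_i), i.e. out_ball A i (xs ! i) for i < b.\<close>
definition burning_seq :: "'a set \<Rightarrow> ('a \<times> 'a) set \<Rightarrow> 'a list \<Rightarrow> bool" where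
  "burning_seq V A xs \<longleftrightarrow> set xs \<subseteq> V \<and>
     V = (\<Union>i<length xs. out_ball A i (xs ! i))"

definition burning_number :: "'a set \<Rightarrow> ('a \<times> 'a) set \<Rightarrow> nat" where
  "burning_number V A = (LEAST b. \<exists>xs. length xs = b \<and> burning_seq V A xs)"

end

theory Submission
  imports Defs
begin

text \<open>Every node burns itself, so listing all nodes is a burning sequence. If the
  tail u of an arc (u, w) is placed last behind at least one other node, its ball has
  radius at least 1 and also burns w, which saves one entry. Conversely, a ball around x
  contains only x and heads of arcs, so a burning sequence has at least as many entries
  as there are nodes that are not heads of arcs: this is sharp without arcs and for a
  single arc. A sequence with at most one entry burns at most one node, which settles
  digraphs with at most two nodes.\<close>

lemma out_ball_0 [simp]: "out_ball A 0 v = {v}"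
  unfolding out_ball_def by auto

lemma out_ball_center: "v \<in> out_ball A k v"
  unfolding out_ball_def by auto

lemma out_ball_arc: "(v, w) \<in> A \<Longrightarrow> 1 \<le> k \<Longrightarrow> w \<in> out_ball A k v"
  unfolding out_ball_def by (auto intro!: exI[of _ 1])

lemma out_ball_subset: "out_ball A k v \<subseteq> insert v (Range A)"
proof
  fix w assume "w \<in> out_ball A k v"
  then obtain j where "(v, w) \<in> A ^^ j" unfolding out_ball_def by blast
  then have "(v, w) \<in> A\<^sup>*" by (rule relpow_imp_rtrancl)
  then show "w \<in> insert v (Range A)" by (cases rule: rtranclE) auto
qed

lemma burning_seqI:
  assumes "digraph V A" "set xs \<subseteq> V" "V \<subseteq> (\<Union>i<length xs. out_ball A i (xs ! i))"
  shows "burning_seq V A xs"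
proof -
  have "Range A \<subseteq> V" using assms(1) unfolding digraph_def by auto
  then have "out_ball A i (xs ! i) \<subseteq> V" if "i < length xs" for i
    using that assms(2) out_ball_subset[of A i "xs ! i"] nth_mem[OF that] by blast
  then show ?thesis using assms(2,3) unfolding burning_seq_def by blast
qed

lemma burning_seq_subset_Range:
  assumes "burning_seq V A xs"
  shows "V \<subseteq> set xs \<union> Range A"
proof
  fix v assume "v \<in> V"
  then obtain i where "i < length xs" "v \<in> out_ball A i (xs ! i)"
    using assms unfolding burning_seq_def by blast
  then show "v \<in> set xs \<union> Range A" using out_ball_subset[of A i "xs ! i"] by auto
qed

lemma card_le_length_plus_card_Range:
  assumes "burning_seq V A xs" "finite (Range A)"
  shows "card V \<le> length xs + card (Range A)"
proof -
  have "card V \<le> card (set xs \<union> Range A)"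
    using burning_seq_subset_Range[OF assms(1)] assms(2) by (intro card_mono) auto
  also have "\<dots> \<le> card (set xs) + card (Range A)" by (rule card_Un_le)
  also have "\<dots> \<le> length xs + card (Range A)" using card_length[of xs] by linarith
  finally show ?thesis .
qed

lemma card_eq_length_if_length_le_1:
  assumes "burning_seq V A xs" "length xs \<le> 1"
  shows "card V = length xs"
proof (cases xs)
  case Nil
  then show ?thesis using assms(1) unfolding burning_seq_def by simp
next
  case (Cons x ys)
  with assms(2) have "xs = [x]" by simp
  then have "{..<length xs} = {0}" by auto
  with \<open>xs = [x]\<close> show ?thesis using assms(1) unfolding burning_seq_def by simp
qed

lemma burning_seq_of_set:
  assumes "digraph V A" "set xs = V"
  shows "burning_seq V A xs"
proof (rule burning_seqI[OF assms(1)])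
  show "V \<subseteq> (\<Union>i<length xs. out_ball A i (xs ! i))"
    using assms(2) out_ball_center by (force simp: in_set_conv_nth)
qed (use assms(2) in simp)

lemma burning_seq_with_arc:
  assumes "digraph V A" "(u, w) \<in> A" "set ys = V - {u, w}" "ys \<noteq> []"
  shows "burning_seq V A (ys @ [u])"
proof (rule burning_seqI[OF assms(1)])
  have "u \<in> V" using assms(1,2) unfolding digraph_def by auto
  then show "set (ys @ [u]) \<subseteq> V" using assms(3) by auto
  have "{u, w} \<subseteq> out_ball A (length ys) u"
    using out_ball_center out_ball_arc[OF assms(2)] assms(4) by (simp add: Suc_leI)
  moreover have "v \<in> (\<Union>i<length ys. out_ball A i (ys ! i))" if "v \<in> set ys" for v
    using that out_ball_center by (force simp: in_set_conv_nth)
  ultimately show "V \<subseteq> (\<Union>i<length (ys @ [u]). out_ball A i ((ys @ [u]) ! i))"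
    using assms(3) by (fastforce simp: nth_append)
qed

lemma burning_number_le: "burning_seq V A xs \<Longrightarrow> burning_number V A \<le> length xs"
  unfolding burning_number_def by (rule Least_le) auto

lemma burning_number_attained:
  assumes "digraph V A"
  obtains xs where "burning_seq V A xs" "length xs = burning_number V A"
proof -
  obtain ys where "set ys = V" using assms finite_list unfolding digraph_def by blast
  then have "burning_seq V A ys" by (rule burning_seq_of_set[OF assms])
  have "\<exists>xs. length xs = burning_number V A \<and> burning_seq V A xs"
    unfolding burning_number_def by (rule LeastI_ex) (use \<open>burning_seq V A ys\<close> in blast)
  with that show ?thesis by blast
qed

lemma burning_number_le_card:
  assumes "digraph V A"
  shows "burning_number V A \<le> card V"
proof -
  obtain xs where "set xs = V" "distinct xs"
    using assms finite_distinct_list unfolding digraph_def by blast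
  then show ?thesis using burning_number_le[OF burning_seq_of_set[OF assms]] distinct_card
    by fastforce
qed

lemma burning_number_le_card_minus_1:
  assumes "digraph V A" "A \<noteq> {}" "card V > 2"
  shows "burning_number V A \<le> card V - 1"
proof -
  obtain u w where uw: "(u, w) \<in> A" using assms(2) by auto
  with assms(1) have "u \<in> V" "w \<in> V" "u \<noteq> w" "finite V" unfolding digraph_def by auto
  then obtain ys where ys: "set ys = V - {u, w}" "distinct ys"
    using finite_distinct_list by (metis finite_Diff)
  have "length ys = card (V - {u, w})" using ys by (metis distinct_card)
  also have "\<dots> = card V - 2"
    using \<open>u \<in> V\<close> \<open>w \<in> V\<close> \<open>u \<noteq> w\<close> \<open>finite V\<close> by (simp add: card_Diff_subset)
  finally have "length ys = card V - 2" .
  with assms(3) have "ys \<noteq> []" "length (ys @ [u]) = card V - 1" by auto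
  then show ?thesis
    using burning_number_le[OF burning_seq_with_arc[OF assms(1) uw ys(1)]] by simp
qed

lemma card_minus_card_Range_le_burning_number:
  assumes "digraph V A"
  shows "card V - card (Range A) \<le> burning_number V A"
proof -
  obtain xs where xs: "burning_seq V A xs" "length xs = burning_number V A"
    using burning_number_attained[OF assms] .
  have "finite (Range A)"
    using assms finite_subset[of "Range A" V] unfolding digraph_def by blast
  then show ?thesis using card_le_length_plus_card_Range[OF xs(1)] xs(2) by simp
qed

lemma min_card_2_le_burning_number:
  assumes "digraph V A"
  shows "min (card V) 2 \<le> burning_number V A"
proof -
  obtain xs where xs: "burning_seq V A xs" "length xs = burning_number V A"
    using burning_number_attained[OF assms] .
  show ?thesis
  proof (cases "length xs \<le> 1")
    case True
    then show ?thesis using card_eq_length_if_length_le_1[OF xs(1)] xs(2) by simp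
  next
    case False
    then show ?thesis using xs(2) by simp
  qed
qed

lemma burning_number_single_arc:
  fixes n :: nat
  assumes "n > 2"
  shows "burning_number {0..<n} {(0, 1)} = n - 1"
proof -
  have D: "digraph {0..<n} {(0, 1)}" using assms unfolding digraph_def by auto
  show ?thesis
    using burning_number_le_card_minus_1[OF D] card_minus_card_Range_le_burning_number[OF D] assms
    by simp
qed

theorem mainTheorem1:
  shows "(\<forall>(V :: 'a set) A. digraph V A \<longrightarrow>
            (A = {} \<or> card V \<in> {1, 2} \<longrightarrow> burning_number V A = card V) \<and>
            (card V > 2 \<and> A \<noteq> {} \<longrightarrow> burning_number V A \<le> card V - 1))
       \<and> (\<forall>n::nat. n > 2 \<longrightarrow>
            (\<exists>(V :: nat set) A. digraph V A \<and> card V = n \<and> A \<noteq> {} \<and>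
               burning_number V A = n - 1))"
proof (intro conjI allI impI)
  fix V :: "'a set" and A
  assume D: "digraph V A"
  show "burning_number V A = card V" if "A = {} \<or> card V \<in> {1, 2}"
  proof (rule antisym)
    show "burning_number V A \<le> card V" using burning_number_le_card[OF D] .
    show "card V \<le> burning_number V A"
      using that card_minus_card_Range_le_burning_number[OF D] min_card_2_le_burning_number[OF D]
      by auto
  qed
  show "burning_number V A \<le> card V - 1" if "card V > 2 \<and> A \<noteq> {}"
    using that burning_number_le_card_minus_1[OF D] by blast
next
  fix n :: nat assume "n > 2"
  then show "\<exists>(V :: nat set) A. digraph V A \<and> card V = n \<and> A \<noteq> {} \<and>
               burning_number V A = n - 1"
    using burning_number_single_arc unfolding digraph_def
    by (intro exI[of _ "{0..<n}"] exI[of _ "{(0, 1)}"]) auto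
qed

end
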